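(* Let $\delta,k'$ be non-negative integers with $\delta>k'+1$, and let $r,t$ be non-negative integers such that $\binom{\delta}{2}-k'=\binom{r}{2}+t$ with $0\le t<r$. Then \[\binom{\delta}{3}-\binom{r}{3}-\binom{t}{2}=\sum_{i=2}^{k'+1}(\delta-i).\]
   Context: Binomial coefficients satisfy $\binom{a}{b}=0$ when $0\le a<b$. *)

theory Defs
  imports Main
begin

end

theory Submission
  imports Defs
begin

text \<open>Every n has a unique representation n = C(r,2) + t with 0 \<le> t < r, namely the one with
  C(r,2) \<le> n < C(r+1,2). Since k' \<le> \<delta> - 2, the number C(\<delta>,2) - k' = C(\<delta>-1,2) + (\<delta>-1-k')
  has r = \<delta>-1 and t = \<delta>-1-k' when k' > 0 (and r = \<delta>, t = 0 when k' = 0). Pascal's rule then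
  reduces the left-hand side to C(\<delta>-1,2) - C(\<delta>-1-k',2), which telescopes to the sum.\<close>

lemma choose_two_Suc: "Suc n choose 2 = (n choose 2) + n"
  by (simp add: numeral_2_eq_2)

lemma choose_three_Suc: "Suc n choose 3 = (n choose 3) + (n choose 2)"
  by (simp add: numeral_3_eq_3 numeral_2_eq_2)

lemma choose_two_add_less_choose_two:
  assumes "t < r" "r < r'"
  shows "(r choose 2) + t < r' choose 2"
proof -
  have "(r choose 2) + t < Suc r choose 2"
    unfolding choose_two_Suc using assms(1) by simp
  also have "\<dots> \<le> r' choose 2"
    using assms(2) by (simp add: binomial_right_mono)
  finally show ?thesis .
qed

lemma choose_two_add_unique:
  fixes r t r' t' :: nat
  assumes eq: "(r choose 2) + t = (r' choose 2) + t'" and "t < r" "t' < r'"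
  shows "r = r' \<and> t = t'"
proof (cases r r' rule: linorder_cases)
  case less
  with assms have "(r' choose 2) + t' < r' choose 2"
    using choose_two_add_less_choose_two[of t r r'] by simp
  then show ?thesis by linarith
next
  case greater
  with assms have "(r choose 2) + t < r choose 2"
    using choose_two_add_less_choose_two[of t' r' r] by simp
  then show ?thesis by linarith
next
  case equal
  then show ?thesis using eq by simp
qed

lemma choose_two_diff_eq_sum:
  "k \<le> n \<Longrightarrow> int (n choose 2) - int ((n - k) choose 2) = (\<Sum>i = 1..k. int n - int i)"
proof (induction k)
  case 0
  then show ?case by simp
next
  case (Suc k)
  have "n - k = Suc (n - Suc k)"
    using Suc.prems by simp
  then have "int ((n - k) choose 2) = int ((n - Suc k) choose 2) + int (n - Suc k)"
    by (simp add: choose_two_Suc)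
  then show ?case
    using Suc by (simp add: of_nat_diff)
qed

theorem lemma3p7:
  fixes \<delta> k' r t :: nat
  assumes "\<delta> > k' + 1"
    and "int (\<delta> choose 2) - int k' = int (r choose 2) + int t"
    and "t < r"
  shows "int (\<delta> choose 3) - int (r choose 3) - int (t choose 2)
           = (\<Sum>i = 2..k' + 1. int \<delta> - int i)"
proof -
  obtain d where \<delta>: "\<delta> = Suc d"
    using assms(1) by (cases \<delta>) auto
  have rep: "\<delta> choose 2 = (r choose 2) + t + k'"
    using assms(2) by linarith
  show ?thesis
  proof (cases "k' = 0")
    case True
    with rep assms(1,3) have "r = \<delta> \<and> t = 0"
      using choose_two_add_unique[of r t \<delta> 0] by simp
    with True show ?thesis by simp
  next
    case False
    have "\<delta> choose 2 = (d choose 2) + (d - k') + k'"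
      using assms(1) \<delta> by (simp add: choose_two_Suc)
    with rep False assms(1,3) \<delta> have r: "r = d" and t: "t = d - k'"
      using choose_two_add_unique[of r t d "d - k'"] by auto
    have "int (\<delta> choose 3) - int (r choose 3) - int (t choose 2)
            = int (d choose 2) - int ((d - k') choose 2)"
      by (simp add: \<delta> r t choose_three_Suc)
    also have "\<dots> = (\<Sum>i = 1..k'. int d - int i)"
      using assms(1) \<delta> by (intro choose_two_diff_eq_sum) simp
    also have "\<dots> = (\<Sum>i = 2..k' + 1. int \<delta> - int i)"
      by (simp add: \<delta> numeral_2_eq_2 sum.shift_bounds_cl_Suc_ivl del: sum.cl_ivl_Suc)
    finally show ?thesis .
  qed
qed

end
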